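(* Let $X$ be a complete CAT(0) space, $f:X\to(-\infty,\infty]$ a proper, convex, lower semicontinuous function, $C\subseteq X$ nonempty, and $\psi:[0,\infty)\to[0,\infty)$ an increasing function vanishing only at $0$. Assume $f$ is uniformly convex on $C$ with modulus $\psi$, and let $\gamma>0$ be such that $J_\gamma(C)\subseteq C$. Then $J_\gamma$ is uniformly firmly nonexpansive on $C$ with modulus $2\gamma\psi$.
   Context: A geodesic space $(X,d)$ is CAT(0) if for all $z\in X$, all geodesics $\gamma:[a,b]\to X$ and all $t\in[0,1]$, $d^2(z,\gamma((1-t)a+tb))\le(1-t)d^2(z,\gamma(a))+td^2(z,\gamma(b))-t(1-t)d^2(\gamma(a),\gamma(b))$; $(1-t)x+ty$ denotes the point at distance $t\,d(x,y)$ from $x$ on the unique geodesic from $x$ to $y$. $J_\gamma(x):=\arg\min_{y\in X}\left[f(y)+\frac1{2\gamma}d^2(x,y)\right]$ (exists uniquely). $f$ is uniformly convex on $C$ with modulus $\psi$ if for all $x,y\in C$, $t\in[0,1]$: $f((1-t)x+ty)\le(1-t)f(x)+tf(y)-t(1-t)\psi(d(x,y))$. A map $T$ is uniformly firmly nonexpansive on $C$ with modulus $\varphi$ if $T(C)\subseteq C$ and for all $x,y\in C$, $t\in[0,1]$: $d^2(Tx,Ty)\le d^2((1-t)x+tTx,(1-t)y+tTy)-2(1-t)\varphi(d(Tx,Ty))$. *)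

theory Defs
  imports "HOL-Analysis.Analysis"
begin

definition geodesic :: "(real \<Rightarrow> 'a::metric_space) \<Rightarrow> real \<Rightarrow> real \<Rightarrow> bool" where
  "geodesic g a b \<longleftrightarrow> a \<le> b \<and>
     (\<forall>s\<in>{a..b}. \<forall>t\<in>{a..b}. dist (g s) (g t) = \<bar>s - t\<bar>)"

definition geodesic_space :: "'a::metric_space itself \<Rightarrow> bool" where
  "geodesic_space _ \<longleftrightarrow>
     (\<forall>x y::'a. \<exists>g a b. geodesic g a b \<and> g a = x \<and> g b = y)"

definition CAT0 :: "'a::metric_space itself \<Rightarrow> bool" where
  "CAT0 T \<longleftrightarrow> geodesic_space T \<and>
     (\<forall>(z::'a) g a b t. geodesic g a b \<and> t \<in> {0..1} \<longrightarrow>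
        (dist z (g ((1 - t) * a + t * b)))\<^sup>2
          \<le> (1 - t) * (dist z (g a))\<^sup>2 + t * (dist z (g b))\<^sup>2
             - t * (1 - t) * (dist (g a) (g b))\<^sup>2)"

text \<open>(1-t)x + ty: the point at distance t d(x,y) from x on the (unique) geodesic from x to y.\<close>
definition geo_comb :: "real \<Rightarrow> 'a::metric_space \<Rightarrow> 'a \<Rightarrow> 'a" where
  "geo_comb t x y = (THE z. \<exists>g. geodesic g 0 (dist x y) \<and> g 0 = x \<and> g (dist x y) = y
                              \<and> z = g (t * dist x y))"

text \<open>Functions X \<rightarrow> (-\<infinity>,\<infinity>] are modelled as ereal-valued functions never equal to -\<infinity>.\<close>
definition proper_fun :: "('a \<Rightarrow> ereal) \<Rightarrow> bool" where
  "proper_fun f \<longleftrightarrow> (\<forall>x. f x \<noteq> -\<infinity>) \<and> (\<exists>x. f x \<noteq> \<infinity>)"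

definition convex_fun :: "('a::metric_space \<Rightarrow> ereal) \<Rightarrow> bool" where
  "convex_fun f \<longleftrightarrow> (\<forall>x y t. t \<in> {0..1} \<longrightarrow>
      f (geo_comb t x y) \<le> ereal (1 - t) * f x + ereal t * f y)"

definition lsc_fun :: "('a::topological_space \<Rightarrow> ereal) \<Rightarrow> bool" where
  "lsc_fun f \<longleftrightarrow> (\<forall>c. closed {x. f x \<le> c})"

definition uniformly_convex_on :: "'a::metric_space set \<Rightarrow> (real \<Rightarrow> real) \<Rightarrow> ('a \<Rightarrow> ereal) \<Rightarrow> bool" where
  "uniformly_convex_on C \<psi> f \<longleftrightarrow> (\<forall>x\<in>C. \<forall>y\<in>C. \<forall>t\<in>{0..1}.
      f (geo_comb t x y) \<le> ereal (1 - t) * f x + ereal t * f y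
                           - ereal (t * (1 - t) * \<psi> (dist x y)))"

definition resolvent :: "('a::metric_space \<Rightarrow> ereal) \<Rightarrow> real \<Rightarrow> 'a \<Rightarrow> 'a" where
  "resolvent f \<gamma> x = (THE y. \<forall>z. f y + ereal (1 / (2 * \<gamma>) * (dist x y)\<^sup>2)
                                 \<le> f z + ereal (1 / (2 * \<gamma>) * (dist x z)\<^sup>2))"

definition uniformly_firmly_nonexpansive_on :: "'a::metric_space set \<Rightarrow> (real \<Rightarrow> real) \<Rightarrow> ('a \<Rightarrow> 'a) \<Rightarrow> bool" where
  "uniformly_firmly_nonexpansive_on C \<phi> T \<longleftrightarrow> T ` C \<subseteq> C \<and>
     (\<forall>x\<in>C. \<forall>y\<in>C. \<forall>t\<in>{0..1}.
        (dist (T x) (T y))\<^sup>2 \<le> (dist (geo_comb t x (T x)) (geo_comb t y (T y)))\<^sup>2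
                                - 2 * (1 - t) * \<phi> (dist (T x) (T y)))"

end

theory Submission
  imports Defs
begin

(* J\<^sub>\<gamma> x is the minimizer of f + d(x,\<cdot>)\<^sup>2/(2\<gamma>); it exists because, by the CAT(0)
  inequality at midpoints, minimizing sequences of this strongly convex functional are Cauchy.
  Comparing p = J\<^sub>\<gamma> x with the points of the geodesic [p,q] and using the uniform convexity of
  f there gives, for u = (1-t)x + tp, the variational inequality
  2\<gamma>(1-t)(f p - f q + \<psi>(d(p,q))) \<le> d(u,q)\<^sup>2 - d(u,p)\<^sup>2 - d(p,q)\<^sup>2.
  Adding it to its counterpart for q = J\<^sub>\<gamma> y and v = (1-t)y + tq, the values of f cancel and
  the CAT(0) quadrilateral inequality d(u,q)\<^sup>2 + d(v,p)\<^sup>2 \<le> d(u,p)\<^sup>2 + d(v,q)\<^sup>2 + d(u,v)\<^sup>2 + d(p,q)\<^sup>2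
  yields the claim. *)

lemma CAT0_ineq:
  assumes "CAT0 TYPE('a::metric_space)" "geodesic g a b" "t \<in> {0..1}"
  shows "(dist (z::'a) (g ((1 - t) * a + t * b)))\<^sup>2
    \<le> (1 - t) * (dist z (g a))\<^sup>2 + t * (dist z (g b))\<^sup>2 - t * (1 - t) * (dist (g a) (g b))\<^sup>2"
  using assms unfolding CAT0_def by blast

lemma geodesic_dist:
  assumes "geodesic g a b" "s \<in> {a..b}" "t \<in> {a..b}"
  shows "dist (g s) (g t) = \<bar>s - t\<bar>"
  using assms unfolding geodesic_def by blast

lemma mult_dist_atLeastAtMost:
  "t \<in> {0..1} \<Longrightarrow> t * dist x y \<in> {0..dist x y}"
  using zero_le_dist[of x y] by (auto intro: mult_left_le_one_le)

lemma CAT0_geodesic_from_0: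
  assumes "CAT0 TYPE('a::metric_space)"
  obtains g where "geodesic g 0 (dist x y)" "g 0 = x" "g (dist x y) = (y::'a)"
proof -
  from assms obtain g a b where g: "geodesic g a b" "g a = x" "g b = y"
    unfolding CAT0_def geodesic_space_def by blast
  have ab: "a \<le> b" using g(1) unfolding geodesic_def by simp
  have D: "dist x y = b - a" using geodesic_dist[OF g(1), of a b] ab g by simp
  have "geodesic (\<lambda>s. g (s + a)) 0 (dist x y)"
    unfolding geodesic_def D
  proof (intro conjI ballI)
    fix s t
    assume "s \<in> {0..b - a}" "t \<in> {0..b - a}"
    then show "dist (g (s + a)) (g (t + a)) = \<bar>s - t\<bar>"
      using geodesic_dist[OF g(1), of "s + a" "t + a"] by simp
  qed (use ab in simp)
  moreover have "g (0 + a) = x" "g (dist x y + a) = y" using g D by auto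
  ultimately show ?thesis using that by blast
qed

lemma CAT0_geodesic_unique:
  assumes cat: "CAT0 TYPE('a::metric_space)"
    and g1: "geodesic g1 0 D" and g2: "geodesic g2 0 D"
    and "g1 0 = g2 0" "g1 D = g2 D" and s: "s \<in> {0..D}"
  shows "g1 s = (g2 s :: 'a)"
proof (cases "D = 0")
  case True
  then show ?thesis using assms by auto
next
  case False
  then have D: "D > 0" using g1 unfolding geodesic_def by auto
  define t where "t = s / D"
  have t: "t \<in> {0..1}" and sD: "s = t * D" using s D by (auto simp: t_def)
  have "(dist (g1 s) (g2 s))\<^sup>2 \<le> (1 - t) * s\<^sup>2 + t * (D - s)\<^sup>2 - t * (1 - t) * D\<^sup>2"
    using CAT0_ineq[OF cat g2 t, of "g1 s"] sD s assms(4,5)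
      geodesic_dist[OF g1 s, of 0] geodesic_dist[OF g1 s, of D] geodesic_dist[OF g2, of 0 D] D
    by (simp add: dist_commute)
  also have "\<dots> = 0" unfolding sD by (simp add: power2_eq_square algebra_simps)
  finally show ?thesis by simp
qed

lemma CAT0_geo_comb_on_geodesic:
  assumes cat: "CAT0 TYPE('a::metric_space)" and t: "t \<in> {0..1}"
  obtains g where "geodesic g 0 (dist x y)" "g 0 = x" "g (dist x y) = (y::'a)"
    "geo_comb t x y = g (t * dist x y)"
proof -
  obtain g where g: "geodesic g 0 (dist x y)" "g 0 = x" "g (dist x y) = y"
    using CAT0_geodesic_from_0[OF cat] .
  note tD = mult_dist_atLeastAtMost[OF t, of x y]
  have "geo_comb t x y = g (t * dist x y)"
    unfolding geo_comb_def
  proof (rule the_equality)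
    show "\<exists>g'. geodesic g' 0 (dist x y) \<and> g' 0 = x \<and> g' (dist x y) = y
        \<and> g (t * dist x y) = g' (t * dist x y)"
      using g by blast
  next
    fix z
    assume "\<exists>g'. geodesic g' 0 (dist x y) \<and> g' 0 = x \<and> g' (dist x y) = y \<and> z = g' (t * dist x y)"
    then obtain g' where "geodesic g' 0 (dist x y)" "g' 0 = x" "g' (dist x y) = y"
      "z = g' (t * dist x y)"
      by blast
    then show "z = g (t * dist x y)"
      using CAT0_geodesic_unique[OF cat _ g(1) _ _ tD] g by simp
  qed
  with g that show ?thesis by blast
qed

lemma dist_geo_comb_left:
  assumes "CAT0 TYPE('a::metric_space)" "t \<in> {0..1}"
  shows "dist x (geo_comb t x y) = t * dist x (y::'a)"
proof -
  obtain g where g: "geodesic g 0 (dist x y)" "g 0 = x" "geo_comb t x y = g (t * dist x y)"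
    using CAT0_geo_comb_on_geodesic[OF assms] by metis
  from mult_dist_atLeastAtMost[OF assms(2), of x y] show ?thesis
    using geodesic_dist[OF g(1), of 0] g assms(2) by simp
qed

lemma dist_geo_comb_right:
  assumes "CAT0 TYPE('a::metric_space)" "t \<in> {0..1}"
  shows "dist (geo_comb t x y) y = (1 - t) * dist x (y::'a)"
proof -
  obtain g where g: "geodesic g 0 (dist x y)" "g (dist x y) = y" "geo_comb t x y = g (t * dist x y)"
    using CAT0_geo_comb_on_geodesic[OF assms] by metis
  from mult_dist_atLeastAtMost[OF assms(2), of x y] show ?thesis
    using geodesic_dist[OF g(1), of _ "dist x y"] g by (simp add: algebra_simps)
qed

lemma CAT0_geo_comb_ineq:
  assumes cat: "CAT0 TYPE('a::metric_space)" and t: "t \<in> {0..1}"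
  shows "(dist z (geo_comb t x y))\<^sup>2
    \<le> (1 - t) * (dist z x)\<^sup>2 + t * (dist z y)\<^sup>2 - t * (1 - t) * (dist x (y::'a))\<^sup>2"
proof -
  obtain g where g: "geodesic g 0 (dist x y)" "g 0 = x" "g (dist x y) = y"
    "geo_comb t x y = g (t * dist x y)"
    using CAT0_geo_comb_on_geodesic[OF cat t] .
  show ?thesis using CAT0_ineq[OF cat g(1) t, of z] g by simp
qed

lemma CAT0_quadrilateral_ineq:
  assumes cat: "CAT0 TYPE('a::metric_space)"
  shows "(dist u q)\<^sup>2 + (dist v p)\<^sup>2
    \<le> (dist u p)\<^sup>2 + (dist v q)\<^sup>2 + (dist u v)\<^sup>2 + (dist p (q::'a))\<^sup>2"
proof -
  define m where "m = geo_comb (1/2) u q"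
  have half: "(1/2::real) \<in> {0..1}" by simp
  have "(dist v p)\<^sup>2 \<le> (dist v m + dist m p)\<^sup>2"
    using dist_triangle[of v p m] by (simp add: power_mono)
  also have "\<dots> \<le> 2 * (dist v m)\<^sup>2 + 2 * (dist p m)\<^sup>2"
    using sum_squares_ge_zero[of "dist v m - dist p m" 0]
    by (simp add: dist_commute power2_eq_square algebra_simps)
  finally show ?thesis
    using CAT0_geo_comb_ineq[OF cat half, of v u q] CAT0_geo_comb_ineq[OF cat half, of p u q]
    unfolding m_def by (simp add: dist_commute)
qed

definition penalized_minimizer :: "('a::metric_space \<Rightarrow> ereal) \<Rightarrow> real \<Rightarrow> 'a \<Rightarrow> 'a \<Rightarrow> bool" where
  "penalized_minimizer f c x p \<longleftrightarrow>
     (\<forall>z. f p + ereal (c * (dist x p)\<^sup>2) \<le> f z + ereal (c * (dist x z)\<^sup>2))"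

lemma resolvent_eq_The_penalized_minimizer:
  "resolvent f \<gamma> x = (THE p. penalized_minimizer f (1 / (2 * \<gamma>)) x p)"
  unfolding resolvent_def penalized_minimizer_def ..

lemma proper_fun_le_ereal:
  assumes "proper_fun f" "f z \<le> ereal r"
  obtains s where "f z = ereal s" "s \<le> r"
  using assms unfolding proper_fun_def by (cases "f z") auto

lemma convex_fun_le_ereal:
  assumes "convex_fun f" "f x = ereal a" "f y = ereal b" "t \<in> {0..1}"
  shows "f (geo_comb t x y) \<le> ereal ((1 - t) * a + t * b)"
proof -
  have "f (geo_comb t x y) \<le> ereal (1 - t) * f x + ereal t * f y"
    using assms(1,4) unfolding convex_fun_def by blast
  then show ?thesis using assms(2,3) by simp
qed

text \<open>Lower semicontinuity gives a ball around x0 on which f > f x0 - 1; convexity along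
  the geodesic from x0 propagates this bound linearly in the distance.\<close>
lemma proper_convex_lsc_dist_minorant:
  fixes f :: "'a::metric_space \<Rightarrow> ereal"
  assumes cat: "CAT0 TYPE('a)" and pr: "proper_fun f" and cv: "convex_fun f" and lsc: "lsc_fun f"
  obtains x0 a k where "k \<ge> 0" "\<And>y. ereal (a - k * dist x0 y) \<le> f y"
proof -
  obtain x0 a0 where fx0: "f x0 = ereal a0"
    using pr unfolding proper_fun_def by (metis ereal_cases)
  have "open (- {y. f y \<le> ereal (a0 - 1)})"
    using lsc unfolding lsc_fun_def by (simp add: open_Compl)
  moreover have "x0 \<in> - {y. f y \<le> ereal (a0 - 1)}" using fx0 by simp
  ultimately obtain r where r: "r > 0" and near: "\<And>y. dist x0 y < r \<Longrightarrow> ereal (a0 - 1) < f y"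
    unfolding open_dist by (force simp: dist_commute)
  have "ereal (a0 - 1 - 2 / r * dist x0 y) \<le> f y" for y
  proof (cases "dist x0 y < r")
    case True
    have "ereal (a0 - 1 - 2 / r * dist x0 y) \<le> ereal (a0 - 1)" using r by simp
    then show ?thesis using near[OF True] by (meson less_imp_le order_trans)
  next
    case far: False
    show ?thesis
    proof (cases "f y")
      case (real b)
      define d where "d = dist x0 y"
      define s where "s = r / (2 * d)"
      have d: "d \<ge> r" using far by (simp add: d_def)
      have s: "s \<in> {0..1}" "s > 0" using d r by (auto simp: s_def field_simps)
      have "dist x0 (geo_comb s x0 y) = r / 2"
        using dist_geo_comb_left[OF cat s(1), of x0 y] d r by (simp add: d_def[symmetric] s_def)
      then have "ereal (a0 - 1) < f (geo_comb s x0 y)" using near r by simp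
      also have "\<dots> \<le> ereal ((1 - s) * a0 + s * b)"
        using convex_fun_le_ereal[OF cv fx0 real s(1)] .
      finally have "s * (a0 - 1 / s) < s * b" using s by (simp add: algebra_simps)
      then have "a0 - 1 / s < b" using s by simp
      moreover have "1 / s = 2 / r * d" using d r by (simp add: s_def field_simps)
      ultimately show ?thesis using real by (simp add: d_def)
    qed (use pr in \<open>simp_all add: proper_fun_def\<close>)
  qed
  then show ?thesis using that[of "2 / r" "a0 - 1" x0] r by simp
qed

lemma penalized_bounded_below:
  fixes f :: "'a::metric_space \<Rightarrow> ereal"
  assumes cat: "CAT0 TYPE('a)" and pr: "proper_fun f" and cv: "convex_fun f" and lsc: "lsc_fun f"
    and c: "c > 0"
  obtains M where "\<And>z. ereal M \<le> f z + ereal (c * (dist x z)\<^sup>2)"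
proof -
  obtain x0 a k where k: "k \<ge> 0" and minor: "\<And>y. ereal (a - k * dist x0 y) \<le> f y"
    using proper_convex_lsc_dist_minorant[OF cat pr cv lsc] by metis
  define M where "M = a - k * dist x0 x - k\<^sup>2 / (4 * c)"
  have "M \<le> a - k * dist x0 z + c * (dist x z)\<^sup>2" for z
  proof -
    have "k * dist x0 z \<le> k * dist x0 x + k * dist x z"
      using mult_left_mono[OF dist_triangle[of x0 z x] k] by (simp add: distrib_left)
    moreover have "0 \<le> (2 * c * dist x z - k)\<^sup>2" by simp
    then have "- k\<^sup>2 / (4 * c) \<le> c * (dist x z)\<^sup>2 - k * dist x z"
      using c by (simp add: field_simps power2_eq_square)
    ultimately show ?thesis unfolding M_def by linarith
  qed
  then have "ereal M \<le> f z + ereal (c * (dist x z)\<^sup>2)" for z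
    using add_mono[OF minor[of z] order_refl, of "ereal (c * (dist x z)\<^sup>2)"]
    by (simp add: order.trans[rotated])
  then show ?thesis using that by blast
qed

lemma penalized_midpoint_ineq:
  fixes f :: "'a::metric_space \<Rightarrow> ereal"
  assumes cat: "CAT0 TYPE('a)" and cv: "convex_fun f" and c: "c \<ge> 0"
    and a1: "f y1 = ereal a1" and a2: "f y2 = ereal a2"
  shows "f (geo_comb (1/2) y1 y2) + ereal (c * (dist x (geo_comb (1/2) y1 y2))\<^sup>2)
    \<le> ereal ((a1 + c * (dist x y1)\<^sup>2) / 2 + (a2 + c * (dist x y2)\<^sup>2) / 2 - c / 4 * (dist y1 y2)\<^sup>2)"
proof -
  have half: "(1/2::real) \<in> {0..1}" by simp
  have "c * (dist x (geo_comb (1/2) y1 y2))\<^sup>2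
      \<le> c * ((1 - 1/2) * (dist x y1)\<^sup>2 + 1/2 * (dist x y2)\<^sup>2 - 1/2 * (1 - 1/2) * (dist y1 y2)\<^sup>2)"
    using mult_left_mono[OF CAT0_geo_comb_ineq[OF cat half] c] .
  then have "f (geo_comb (1/2) y1 y2) + ereal (c * (dist x (geo_comb (1/2) y1 y2))\<^sup>2)
      \<le> ereal ((1 - 1/2) * a1 + 1/2 * a2)
         + ereal (c * ((1 - 1/2) * (dist x y1)\<^sup>2 + 1/2 * (dist x y2)\<^sup>2 - 1/2 * (1 - 1/2) * (dist y1 y2)\<^sup>2))"
    by (intro add_mono convex_fun_le_ereal[OF cv a1 a2 half]) simp
  then show ?thesis by (simp add: field_simps)
qed

lemma penalized_minimizer_finite:
  assumes "proper_fun f" "penalized_minimizer f c x p"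
  obtains a where "f p = ereal a"
proof -
  obtain z b where "f z = ereal b"
    using assms(1) unfolding proper_fun_def by (metis ereal_cases)
  then have "f p + ereal (c * (dist x p)\<^sup>2) \<le> ereal (b + c * (dist x z)\<^sup>2)"
    using assms(2) unfolding penalized_minimizer_def by (metis plus_ereal.simps(1))
  then show ?thesis using assms(1) that unfolding proper_fun_def by (cases "f p") auto
qed

lemma penalized_minimizer_unique:
  fixes f :: "'a::metric_space \<Rightarrow> ereal"
  assumes cat: "CAT0 TYPE('a)" and pr: "proper_fun f" and cv: "convex_fun f" and c: "c > 0"
    and p: "penalized_minimizer f c x p" and q: "penalized_minimizer f c x q"
  shows "p = q"
proof -
  obtain a where a: "f p = ereal a" using penalized_minimizer_finite[OF pr p] .
  obtain b where b: "f q = ereal b" using penalized_minimizer_finite[OF pr q] .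
  define m where "m = geo_comb (1/2) p q"
  have "a + c * (dist x p)\<^sup>2 \<le> b + c * (dist x q)\<^sup>2" "b + c * (dist x q)\<^sup>2 \<le> a + c * (dist x p)\<^sup>2"
    using p q a b unfolding penalized_minimizer_def by (metis plus_ereal.simps(1) ereal_less_eq(3))+
  moreover have "ereal (a + c * (dist x p)\<^sup>2) \<le> f m + ereal (c * (dist x m)\<^sup>2)"
    using p a unfolding penalized_minimizer_def by simp
  ultimately have "c / 4 * (dist p q)\<^sup>2 \<le> 0"
    using order.trans[OF _ penalized_midpoint_ineq[OF cat cv _ a b, of c x]] c
    unfolding m_def by fastforce
  then show ?thesis using c by (simp add: mult_le_0_iff)
qed

lemma penalized_minimizing_seq_Cauchy:
  fixes f :: "'a::metric_space \<Rightarrow> ereal"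
  assumes cat: "CAT0 TYPE('a)" and pr: "proper_fun f" and cv: "convex_fun f" and c: "c > 0"
    and lower: "\<And>z. ereal m \<le> f z + ereal (c * (dist x z)\<^sup>2)"
    and y: "\<And>n. f (y n) + ereal (c * (dist x (y n))\<^sup>2) \<le> ereal (m + inverse (real (Suc n)))"
  shows "Cauchy y"
proof -
  have val: "\<exists>a. f (y n) = ereal a \<and> a + c * (dist x (y n))\<^sup>2 \<le> m + inverse (real (Suc n))" for n
    using y[of n] pr unfolding proper_fun_def by (cases "f (y n)") auto
  have close: "c / 4 * (dist (y i) (y j))\<^sup>2 \<le> inverse (real (Suc i)) + inverse (real (Suc j))"
    for i j
  proof -
    obtain a b where a: "f (y i) = ereal a" "a + c * (dist x (y i))\<^sup>2 \<le> m + inverse (real (Suc i))"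
      and b: "f (y j) = ereal b" "b + c * (dist x (y j))\<^sup>2 \<le> m + inverse (real (Suc j))"
      using val by blast
    have "m \<le> (a + c * (dist x (y i))\<^sup>2) / 2 + (b + c * (dist x (y j))\<^sup>2) / 2
                        - c / 4 * (dist (y i) (y j))\<^sup>2"
      using order.trans[OF lower penalized_midpoint_ineq[OF cat cv _ a(1) b(1)]] c by simp
    moreover have "0 \<le> inverse (real (Suc i))" "0 \<le> inverse (real (Suc j))" by simp_all
    ultimately show ?thesis using a(2) b(2) by (simp only: add_divide_distrib)
  qed
  show ?thesis
  proof (rule metric_CauchyI)
    fix e :: real
    assume e: "e > 0"
    obtain N where N: "inverse (real (Suc N)) < c * e\<^sup>2 / 8"
      using reals_Archimedean[of "c * e\<^sup>2 / 8"] c e by auto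
    have "dist (y i) (y j) < e" if "N \<le> i" "N \<le> j" for i j
    proof -
      have "inverse (real (Suc i)) \<le> inverse (real (Suc N))" "inverse (real (Suc j)) \<le> inverse (real (Suc N))"
        using that by (simp_all add: le_imp_inverse_le)
      then have "c / 4 * (dist (y i) (y j))\<^sup>2 < c / 4 * e\<^sup>2" using close[of i j] N by linarith
      then have "(dist (y i) (y j))\<^sup>2 < e\<^sup>2" using c by simp
      then show ?thesis using e by (simp add: power_less_imp_less_base)
    qed
    then show "\<exists>M. \<forall>i\<ge>M. \<forall>j\<ge>M. dist (y i) (y j) < e" by blast
  qed
qed

lemma lsc_fun_le_limit:
  assumes lsc: "lsc_fun f" and y: "y \<longlonglongrightarrow> p" and g: "g \<longlonglongrightarrow> L"
    and le: "\<And>n. f (y n) \<le> ereal (g n)"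
  shows "f p \<le> ereal L"
proof (rule ereal_le_epsilon2)
  fix e :: real
  assume "e > 0"
  then have "eventually (\<lambda>n. g n < L + e) sequentially"
    using order_tendstoD(2)[OF g] by simp
  then have "eventually (\<lambda>n. y n \<in> {z. f z \<le> ereal (L + e)}) sequentially"
    by eventually_elim (metis le ereal_less_eq(3) less_imp_le order.trans mem_Collect_eq)
  moreover have "closed {z. f z \<le> ereal (L + e)}" using lsc unfolding lsc_fun_def by blast
  ultimately have "p \<in> {z. f z \<le> ereal (L + e)}"
    using Lim_in_closed_set[OF _ _ trivial_limit_sequentially y] by blast
  then show "f p \<le> ereal L + ereal e" by simp
qed

lemma penalized_minimizer_exists:
  fixes f :: "'a::complete_space \<Rightarrow> ereal"
  assumes cat: "CAT0 TYPE('a)" and pr: "proper_fun f" and cv: "convex_fun f" and lsc: "lsc_fun f"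
    and c: "c > 0"
  obtains p where "penalized_minimizer f c x p"
proof -
  define \<Phi> where "\<Phi> z = f z + ereal (c * (dist x z)\<^sup>2)" for z
  obtain M where M: "\<And>z. ereal M \<le> \<Phi> z"
    using penalized_bounded_below[OF cat pr cv lsc c] unfolding \<Phi>_def by blast
  obtain x0 a0 where "f x0 = ereal a0"
    using pr unfolding proper_fun_def by (metis ereal_cases)
  then have "\<Phi> x0 < \<infinity>" by (simp add: \<Phi>_def)
  moreover have "Inf (range \<Phi>) \<le> \<Phi> x0" by (rule Inf_lower) simp
  ultimately have "Inf (range \<Phi>) < \<infinity>" by (meson order.strict_trans1)
  moreover have "ereal M \<le> Inf (range \<Phi>)" using M by (auto intro: Inf_greatest)
  ultimately obtain m where m: "Inf (range \<Phi>) = ereal m" by (cases "Inf (range \<Phi>)") auto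
  have "\<exists>z. \<Phi> z < ereal (m + inverse (real (Suc n)))" for n
  proof -
    have "Inf (range \<Phi>) < ereal (m + inverse (real (Suc n)))" using m by simp
    then show ?thesis unfolding Inf_less_iff by blast
  qed
  then obtain y where y: "\<And>n. \<Phi> (y n) < ereal (m + inverse (real (Suc n)))" by metis
  have lower: "\<And>z. ereal m \<le> \<Phi> z" using m by (metis Inf_lower rangeI)
  have "Cauchy y"
    by (rule penalized_minimizing_seq_Cauchy[OF cat pr cv c, of m x])
      (use lower y[THEN less_imp_le] in \<open>simp_all add: \<Phi>_def\<close>)
  then obtain p where p: "y \<longlonglongrightarrow> p" using Cauchy_convergent_iff convergent_def by blast
  have "f (y n) \<le> ereal (m + inverse (real (Suc n)) - c * (dist x (y n))\<^sup>2)" for n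
    using y[of n] unfolding \<Phi>_def by (cases "f (y n)") auto
  moreover have "(\<lambda>n. m + inverse (real (Suc n)) - c * (dist x (y n))\<^sup>2)
      \<longlonglongrightarrow> m + 0 - c * (dist x p)\<^sup>2"
    by (intro tendsto_intros LIMSEQ_inverse_real_of_nat p)
  ultimately have "f p \<le> ereal (m - c * (dist x p)\<^sup>2)"
    using lsc_fun_le_limit[OF lsc p] by simp
  then have "\<Phi> p \<le> ereal m" unfolding \<Phi>_def by (cases "f p") auto
  then have "penalized_minimizer f c x p"
    using lower unfolding penalized_minimizer_def \<Phi>_def by (blast intro: order.trans)
  then show ?thesis using that by blast
qed

lemma resolvent_penalized_minimizer:
  fixes f :: "'a::complete_space \<Rightarrow> ereal"
  assumes cat: "CAT0 TYPE('a)" and pr: "proper_fun f" and cv: "convex_fun f" and lsc: "lsc_fun f"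
    and \<gamma>: "\<gamma> > 0"
  shows "penalized_minimizer f (1 / (2 * \<gamma>)) x (resolvent f \<gamma> x)"
proof -
  have c: "1 / (2 * \<gamma>) > 0" using \<gamma> by simp
  have "\<exists>!p. penalized_minimizer f (1 / (2 * \<gamma>)) x p"
    using penalized_minimizer_exists[OF cat pr cv lsc c] penalized_minimizer_unique[OF cat pr cv c]
    by metis
  then show ?thesis unfolding resolvent_eq_The_penalized_minimizer by (rule theI')
qed

text \<open>Moving the base point from x to u = (1-t)x + tp along [x,p] preserves the minimality
  of p up to the factor 1 - t: the triangle inequality through u bounds d(x,w) by t d(x,p) + d(u,w).\<close>
lemma penalized_minimizer_geo_comb_ineq:
  assumes cat: "CAT0 TYPE('a::metric_space)" and p: "penalized_minimizer f c x p" and c: "c \<ge> 0"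
    and a: "f p = ereal a" and b: "f w = ereal b" and t: "t \<in> {0..1}"
  shows "(1 - t) * (a - b) \<le> c * ((dist (geo_comb t x p) w)\<^sup>2 - (dist (geo_comb t x p) (p::'a))\<^sup>2)"
proof -
  define u where "u = geo_comb t x p"
  define A where "A = dist x p"
  define e where "e = dist u w"
  have "a + c * A\<^sup>2 \<le> b + c * (dist x w)\<^sup>2"
    using p a b unfolding penalized_minimizer_def A_def by (metis ereal_less_eq(3) plus_ereal.simps(1))
  then have min: "a - b \<le> c * ((dist x w)\<^sup>2 - A\<^sup>2)" by (simp add: right_diff_distrib)
  have "dist x w \<le> t * A + e"
    using dist_triangle[of x w u] dist_geo_comb_left[OF cat t, of x p] by (simp add: u_def A_def e_def)
  then have "(1 - t) * ((dist x w)\<^sup>2 - A\<^sup>2) \<le> (1 - t) * ((t * A + e)\<^sup>2 - A\<^sup>2)"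
    using t by (intro mult_left_mono) (auto simp: power_mono)
  also have "\<dots> = e\<^sup>2 - ((1 - t) * A)\<^sup>2 - t * ((1 - t) * A - e)\<^sup>2"
    by (simp add: power2_eq_square algebra_simps)
  also have "\<dots> = e\<^sup>2 - (dist u p)\<^sup>2 - t * ((1 - t) * A - e)\<^sup>2"
    using dist_geo_comb_right[OF cat t, of x p] by (simp add: u_def A_def)
  also have "\<dots> \<le> e\<^sup>2 - (dist u p)\<^sup>2" using t by simp
  finally have "(1 - t) * ((dist x w)\<^sup>2 - A\<^sup>2) \<le> e\<^sup>2 - (dist u p)\<^sup>2" .
  then have "c * ((1 - t) * ((dist x w)\<^sup>2 - A\<^sup>2)) \<le> c * (e\<^sup>2 - (dist u p)\<^sup>2)"
    using c by (rule mult_left_mono)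
  moreover have "(1 - t) * (a - b) \<le> (1 - t) * (c * ((dist x w)\<^sup>2 - A\<^sup>2))"
    using min t by (intro mult_left_mono) auto
  ultimately have "(1 - t) * (a - b) \<le> c * (e\<^sup>2 - (dist u p)\<^sup>2)" by (simp add: mult.left_commute)
  then show ?thesis by (simp add: u_def e_def)
qed

text \<open>Test the previous inequality with w = (1-s)p + sq, use uniform convexity of f on [p,q]
  and the CAT(0) inequality for u, divide by s and let s tend to 0.\<close>
lemma penalized_minimizer_variational_ineq:
  assumes cat: "CAT0 TYPE('a::metric_space)" and unif: "uniformly_convex_on C \<psi> f"
    and pr: "proper_fun f" and p: "penalized_minimizer f c x p" and c: "c \<ge> 0"
    and pC: "p \<in> C" and qC: "q \<in> C" and a: "f p = ereal a" and b: "f q = ereal b"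
    and t: "t \<in> {0..1}"
  shows "(1 - t) * (a - b + \<psi> (dist p q))
    \<le> c * ((dist (geo_comb t x p) q)\<^sup>2 - (dist (geo_comb t x p) p)\<^sup>2 - (dist p (q::'a))\<^sup>2)"
proof -
  define u where "u = geo_comb t x p"
  define D where "D = dist p q"
  define L where "L s = (1 - t) * (a - b + (1 - s) * \<psi> D)" for s
  define R where "R s = c * ((dist u q)\<^sup>2 - (dist u p)\<^sup>2 - (1 - s) * D\<^sup>2)" for s
  have "L s \<le> R s" if s: "0 < s" "s \<le> 1" for s
  proof -
    have s01: "s \<in> {0..1}" using s by simp
    define w where "w = geo_comb s p q"
    have "f w \<le> ereal (1 - s) * f p + ereal s * f q - ereal (s * (1 - s) * \<psi> D)"
      using unif pC qC s01 unfolding uniformly_convex_on_def w_def D_def by blast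
    then have "f w \<le> ereal ((1 - s) * a + s * b - s * (1 - s) * \<psi> D)" using a b by simp
    then obtain r where r: "f w = ereal r" and r_le: "r \<le> (1 - s) * a + s * b - s * (1 - s) * \<psi> D"
      using proper_fun_le_ereal[OF pr] by blast
    have "s * (a - b + (1 - s) * \<psi> D) \<le> a - r" using r_le by (simp add: algebra_simps)
    then have "(1 - t) * (s * (a - b + (1 - s) * \<psi> D)) \<le> (1 - t) * (a - r)"
      using t by (intro mult_left_mono) auto
    then have "s * L s \<le> (1 - t) * (a - r)" by (simp add: L_def mult.left_commute)
    also have "\<dots> \<le> c * ((dist u w)\<^sup>2 - (dist u p)\<^sup>2)"
      using penalized_minimizer_geo_comb_ineq[OF cat p c a r t] by (simp add: u_def)
    also have "\<dots> \<le> s * R s"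
      using mult_left_mono[OF CAT0_geo_comb_ineq[OF cat s01, of u p q] c]
      unfolding R_def w_def D_def by (simp add: algebra_simps)
    finally show ?thesis using s by simp
  qed
  then have "eventually (\<lambda>s. L s \<le> R s) (at_right 0)"
    unfolding eventually_at_right_field by (intro exI[of _ 1]) simp
  moreover have "(L \<longlongrightarrow> L 0) (at_right 0)" "(R \<longlongrightarrow> R 0) (at_right 0)"
    unfolding L_def R_def by (auto intro!: tendsto_eq_intros)
  ultimately have "L 0 \<le> R 0" by (intro tendsto_le[OF trivial_limit_at_right_real]) auto
  then show ?thesis by (simp add: L_def R_def u_def D_def)
qed

lemma penalized_minimizers_firm_ineq:
  assumes cat: "CAT0 TYPE('a::metric_space)" and unif: "uniformly_convex_on C \<psi> f"
    and pr: "proper_fun f" and c: "c \<ge> 0" and t: "t \<in> {0..1}"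
    and p: "penalized_minimizer f c x p" "p \<in> C" and q: "penalized_minimizer f c y q" "q \<in> C"
  shows "(1 - t) * (2 * \<psi> (dist p q))
    \<le> c * ((dist (geo_comb t x p) (geo_comb t y q))\<^sup>2 - (dist p (q::'a))\<^sup>2)"
proof -
  define u where "u = geo_comb t x p"
  define v where "v = geo_comb t y q"
  obtain a b where a: "f p = ereal a" and b: "f q = ereal b"
    using penalized_minimizer_finite[OF pr p(1)] penalized_minimizer_finite[OF pr q(1)] by metis
  note var = penalized_minimizer_variational_ineq[OF cat unif pr _ c _ _ _ _ t]
  have "(1 - t) * (a - b + \<psi> (dist p q)) \<le> c * ((dist u q)\<^sup>2 - (dist u p)\<^sup>2 - (dist p q)\<^sup>2)"
    using var[OF p(1) p(2) q(2) a b] by (simp add: u_def)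
  moreover have "(1 - t) * (b - a + \<psi> (dist p q)) \<le> c * ((dist v p)\<^sup>2 - (dist v q)\<^sup>2 - (dist p q)\<^sup>2)"
    using var[OF q(1) q(2) p(2) b a] by (simp add: v_def dist_commute)
  moreover have "c * ((dist u q)\<^sup>2 + (dist v p)\<^sup>2)
      \<le> c * ((dist u p)\<^sup>2 + (dist v q)\<^sup>2 + (dist u v)\<^sup>2 + (dist p q)\<^sup>2)"
    using CAT0_quadrilateral_ineq[OF cat] c by (rule mult_left_mono)
  ultimately show ?thesis unfolding u_def v_def by (simp add: algebra_simps)
qed

theorem proposition4p7:
  fixes f :: "'a::complete_space \<Rightarrow> ereal" and C :: "'a set"
    and \<psi> :: "real \<Rightarrow> real" and \<gamma> :: real
  assumes "CAT0 TYPE('a)"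
    and "proper_fun f" and "convex_fun f" and "lsc_fun f"
    and "C \<noteq> {}"
    and "\<forall>t\<ge>0. \<psi> t \<ge> 0"
    and "mono_on {0..} \<psi>"
    and "\<forall>t\<ge>0. \<psi> t = 0 \<longleftrightarrow> t = 0"
    and "uniformly_convex_on C \<psi> f"
    and "\<gamma> > 0"
    and "resolvent f \<gamma> ` C \<subseteq> C"
  shows "uniformly_firmly_nonexpansive_on C (\<lambda>s. 2 * \<gamma> * \<psi> s) (resolvent f \<gamma>)"
  unfolding uniformly_firmly_nonexpansive_on_def
proof (intro conjI ballI assms(11))
  fix x y and t :: real
  assume "x \<in> C" "y \<in> C" "t \<in> {0..1}"
  define p where "p = resolvent f \<gamma> x"
  define q where "q = resolvent f \<gamma> y"
  have "p \<in> C" "q \<in> C" using assms(11) \<open>x \<in> C\<close> \<open>y \<in> C\<close> by (auto simp: p_def q_def)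
  note minimizer = resolvent_penalized_minimizer[OF assms(1-4,10)]
  have "1 / (2 * \<gamma>) \<ge> 0" using assms(10) by simp
  from penalized_minimizers_firm_ineq[OF assms(1,9,2) this \<open>t \<in> {0..1}\<close>
      minimizer[of x, folded p_def] \<open>p \<in> C\<close> minimizer[of y, folded q_def] \<open>q \<in> C\<close>]
  show "(dist p q)\<^sup>2
      \<le> (dist (geo_comb t x p) (geo_comb t y q))\<^sup>2 - 2 * (1 - t) * (2 * \<gamma> * \<psi> (dist p q))"
    using assms(10) by (simp add: field_simps)
qed

end
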